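(* Let $K$ be a finite simplicial complex, $f$ an injective filtration function on $K$, $n$ a positive integer, and $\alpha$ an $n$-cycle whose homology class $[\alpha]\in H_n(K^f_a)$ is born at $a$ and terminated at a finite value $b>a$. Let $D=(0,\frac{b-a}{2}]$ and let $\Sigma_\varepsilon$ and $\Pi_\varepsilon$ ($\varepsilon\in D$) be as defined in the context. Then for each $t\in D$ there exists $\delta>0$ such that $\Sigma_\varepsilon$ and $\Pi_\varepsilon$ are constant for $\varepsilon\in(t-\delta,t]\cap D$.
   Context: A filtration function on a finite simplicial complex $K$ is a map $f\colon K\to\mathbb{R}$ with $f(\sigma)\le f(\tau)$ whenever $\sigma$ is a face of $\tau$. Sublevel complexes are $K^f_r=f^{-1}((-\infty,r])$, with inclusions $K^f_q\subseteq K^f_r$ for $q\le r$; homology is taken with coefficients in a fixed field. For a nontrivial class $[\alpha]\in H_n(K^f_r)$, its birth is the infimum of $q\le r$ such that $[\alpha]$ is in the image of $H_n(K^f_q)\to H_n(K^f_r)$, and its termination scale is the infimum of $q\ge r$ such that $[\alpha]$ maps to $0$ in $H_n(K^f_q)$. $\|f-g\|_\infty=\max_{\sigma\in K}|f(\sigma)-g(\sigma)|$. An (injective) $\varepsilon$-perturbation of $f$ is an injective filtration function $g$ on $K$ with $\|f-g\|_\infty\le\varepsilon$. For such $g$, let $\Delta_{g,\alpha}$ denote the simplex $\tau$ of $K$ such that the cycle $\alpha$ is a boundary in $K^g_{g(\tau)}$ but not in $K^g_r$ for any $r<g(\tau)$ (the $(n+1)$-simplex of $K^g$ terminating $[\alpha]$).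 Define $\Sigma_\varepsilon=\{\Delta_{g,\alpha}: g \text{ an injective } \varepsilon\text{-perturbation of } f\}$. Let $\sigma_1,\ldots,\sigma_m$ be the $(n+1)$-dimensional simplices of $K$; each injective filtration function $g$ induces a linear ordering of $\{\sigma_1,\dots,\sigma_m\}$ (by increasing $g$-value), regarded as a permutation in $S_m$. Define $\Pi_\varepsilon$ as the set of all such permutations induced by injective $\varepsilon$-perturbations of $f$. *)

theory Defs
  imports Complex_Main "HOL-Combinatorics.Permutations"
begin

definition simplicial_complex :: "'v set set \<Rightarrow> bool" where
  "simplicial_complex K \<longleftrightarrow> finite K \<and>
     (\<forall>\<sigma>\<in>K. finite \<sigma> \<and> \<sigma> \<noteq> {}) \<and>
     (\<forall>\<sigma>\<in>K. \<forall>\<tau>. \<tau> \<subseteq> \<sigma> \<and> \<tau> \<noteq> {} \<longrightarrow> \<tau> \<in> K)"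

definition filtration_fun :: "'v set set \<Rightarrow> ('v set \<Rightarrow> real) \<Rightarrow> bool" where
  "filtration_fun K f \<longleftrightarrow> (\<forall>\<sigma>\<in>K. \<forall>\<tau>\<in>K. \<sigma> \<subseteq> \<tau> \<longrightarrow> f \<sigma> \<le> f \<tau>)"

definition sublevel :: "'v set set \<Rightarrow> ('v set \<Rightarrow> real) \<Rightarrow> real \<Rightarrow> 'v set set" where
  "sublevel K f r = {\<sigma>\<in>K. f \<sigma> \<le> r}"

text \<open>Simplicial chains with coefficients in a field: an n-chain on L assigns
  coefficients to n-simplices (card = n+1) of L, zero elsewhere.  Simplices are
  oriented by the linear order of vertices.\<close>
definition is_chain :: "'v set set \<Rightarrow> nat \<Rightarrow> ('v set \<Rightarrow> 'k::field) \<Rightarrow> bool" where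
  "is_chain L n c \<longleftrightarrow> (\<forall>\<sigma>. c \<sigma> \<noteq> 0 \<longrightarrow> \<sigma> \<in> L \<and> card \<sigma> = n + 1)"

text \<open>Incidence number of the face tau in sigma: (-1)^i if tau arises from sigma
  by deleting its i-th vertex (counting from 0 in increasing order).\<close>
definition incidence :: "'v::linorder set \<Rightarrow> 'v set \<Rightarrow> 'k::field" where
  "incidence \<sigma> \<tau> =
     (if \<tau> \<subseteq> \<sigma> \<and> card \<tau> + 1 = card \<sigma>
      then (- 1) ^ card {v\<in>\<sigma>. v < the_elem (\<sigma> - \<tau>)} else 0)"

definition bdry :: "'v::linorder set set \<Rightarrow> ('v set \<Rightarrow> 'k::field) \<Rightarrow> ('v set \<Rightarrow> 'k)" where
  "bdry K c = (\<lambda>\<tau>. \<Sum>\<sigma>\<in>K. c \<sigma> * incidence \<sigma> \<tau>)"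

definition is_cycle :: "'v::linorder set set \<Rightarrow> 'v set set \<Rightarrow> nat \<Rightarrow> ('v set \<Rightarrow> 'k::field) \<Rightarrow> bool" where
  "is_cycle K L n c \<longleftrightarrow> is_chain L n c \<and> bdry K c = (\<lambda>_. 0)"

definition is_boundary :: "'v::linorder set set \<Rightarrow> 'v set set \<Rightarrow> nat \<Rightarrow> ('v set \<Rightarrow> 'k::field) \<Rightarrow> bool" where
  "is_boundary K L n c \<longleftrightarrow> (\<exists>d. is_chain L (n + 1) d \<and> bdry K d = c)"

definition birth :: "'v::linorder set set \<Rightarrow> ('v set \<Rightarrow> real) \<Rightarrow> nat \<Rightarrow> ('v set \<Rightarrow> 'k::field) \<Rightarrow> real \<Rightarrow> real" where
  "birth K f n \<alpha> r = Inf {q. q \<le> r \<and> (\<exists>\<beta>. is_cycle K (sublevel K f q) n \<beta> \<and>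
        is_boundary K (sublevel K f r) n (\<alpha> - \<beta>))}"

definition term_scale :: "'v::linorder set set \<Rightarrow> ('v set \<Rightarrow> real) \<Rightarrow> nat \<Rightarrow> ('v set \<Rightarrow> 'k::field) \<Rightarrow> real \<Rightarrow> real" where
  "term_scale K f n \<alpha> r = Inf {q. q \<ge> r \<and> is_boundary K (sublevel K f q) n \<alpha>}"

definition inj_perturbation :: "'v set set \<Rightarrow> ('v set \<Rightarrow> real) \<Rightarrow> real \<Rightarrow> ('v set \<Rightarrow> real) \<Rightarrow> bool" where
  "inj_perturbation K f \<epsilon> g \<longleftrightarrow> filtration_fun K g \<and> inj_on g K \<and>
     (\<forall>\<sigma>\<in>K. \<bar>f \<sigma> - g \<sigma>\<bar> \<le> \<epsilon>)"

definition terminating_simplex :: "'v::linorder set set \<Rightarrow> ('v set \<Rightarrow> real) \<Rightarrow> nat \<Rightarrow> ('v set \<Rightarrow> 'k::field) \<Rightarrow> 'v set \<Rightarrow> bool" where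
  "terminating_simplex K g n \<alpha> \<tau> \<longleftrightarrow> \<tau> \<in> K \<and>
     is_boundary K (sublevel K g (g \<tau>)) n \<alpha> \<and>
     (\<forall>r < g \<tau>. \<not> is_boundary K (sublevel K g r) n \<alpha>)"

definition Sigma_eps :: "'v::linorder set set \<Rightarrow> ('v set \<Rightarrow> real) \<Rightarrow> nat \<Rightarrow> ('v set \<Rightarrow> 'k::field) \<Rightarrow> real \<Rightarrow> 'v set set" where
  "Sigma_eps K f n \<alpha> \<epsilon> = {\<tau>. \<exists>g. inj_perturbation K f \<epsilon> g \<and> terminating_simplex K g n \<alpha> \<tau>}"

definition induced_perm :: "'v set list \<Rightarrow> ('v set \<Rightarrow> real) \<Rightarrow> (nat \<Rightarrow> nat) \<Rightarrow> bool" where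
  "induced_perm ss g p \<longleftrightarrow> p permutes {..<length ss} \<and>
     (\<forall>i j. i < j \<and> j < length ss \<longrightarrow> g (ss ! p i) < g (ss ! p j))"

definition Pi_eps :: "'v set set \<Rightarrow> ('v set \<Rightarrow> real) \<Rightarrow> 'v set list \<Rightarrow> real \<Rightarrow> (nat \<Rightarrow> nat) set" where
  "Pi_eps K f ss \<epsilon> = {p. \<exists>g. inj_perturbation K f \<epsilon> g \<and> induced_perm ss g p}"

end

theory Submission
  imports Defs
begin

(* Sigma_eps and Pi_eps grow with eps and are finite, so it suffices that each of their elements
   at scale t persists for all eps slightly below t.  An injective t-perturbation g can be pulled
   towards f: for small mu > 0, (1 - mu) g + mu f is an injective (1 - mu) t-perturbation inducing
   the same total order on K as g, hence the same terminating simplex and the same permutation.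
   Only the finiteness of K, the monotonicity of f and set ss \<subseteq> K enter; the remaining
   hypotheses merely fix the range of eps. *)

definition same_order_on :: "'a set \<Rightarrow> ('a \<Rightarrow> 'b::linorder) \<Rightarrow> ('a \<Rightarrow> 'b) \<Rightarrow> bool" where
  "same_order_on K g h \<longleftrightarrow> (\<forall>\<sigma>\<in>K. \<forall>\<rho>\<in>K. g \<sigma> \<le> g \<rho> \<longleftrightarrow> h \<sigma> \<le> h \<rho>)"

lemma same_order_onI:
  assumes "inj_on g K" and less: "\<forall>\<sigma>\<in>K. \<forall>\<rho>\<in>K. g \<sigma> < g \<rho> \<longrightarrow> h \<sigma> < h \<rho>"
  shows "same_order_on K g h"
  unfolding same_order_on_def
proof (intro ballI)
  fix \<sigma> \<rho> assume "\<sigma> \<in> K" "\<rho> \<in> K"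
  show "g \<sigma> \<le> g \<rho> \<longleftrightarrow> h \<sigma> \<le> h \<rho>"
  proof (cases "\<sigma> = \<rho>")
    case False
    then have "g \<sigma> < g \<rho> \<or> g \<rho> < g \<sigma>"
      using assms(1) \<open>\<sigma> \<in> K\<close> \<open>\<rho> \<in> K\<close> by (meson inj_onD linorder_neqE)
    then show ?thesis
      using less \<open>\<sigma> \<in> K\<close> \<open>\<rho> \<in> K\<close> by (meson less_imp_le linorder_not_le)
  qed simp
qed

lemma same_order_on_less:
  "same_order_on K g h \<Longrightarrow> \<sigma> \<in> K \<Longrightarrow> \<rho> \<in> K \<Longrightarrow> g \<sigma> < g \<rho> \<longleftrightarrow> h \<sigma> < h \<rho>"
  unfolding same_order_on_def by (meson linorder_not_le)

lemma is_boundary_mono: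
  "L \<subseteq> L' \<Longrightarrow> is_boundary K L n c \<Longrightarrow> is_boundary K L' n c"
  unfolding is_boundary_def is_chain_def by blast

lemma strict_sublevel_eq_sublevel:
  fixes K :: "'a set set" and g :: "'a set \<Rightarrow> real"
  assumes "finite K"
  obtains r where "r < c" and "{\<sigma>\<in>K. g \<sigma> < c} = sublevel K g r"
proof
  let ?V = "insert (c - 1) (g ` {\<sigma>\<in>K. g \<sigma> < c})"
  have "finite ?V" using assms by simp
  then show "Max ?V < c" by (subst Max_less_iff) auto
  moreover have "g \<sigma> \<le> Max ?V" if "\<sigma> \<in> K" "g \<sigma> < c" for \<sigma>
    using \<open>finite ?V\<close> that by (intro Max_ge) auto
  ultimately show "{\<sigma>\<in>K. g \<sigma> < c} = sublevel K g (Max ?V)"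
    unfolding sublevel_def by fastforce
qed

lemma terminating_simplex_iff:
  assumes "finite K"
  shows "terminating_simplex K g n \<alpha> \<tau> \<longleftrightarrow> \<tau> \<in> K \<and>
           is_boundary K (sublevel K g (g \<tau>)) n \<alpha> \<and> \<not> is_boundary K {\<sigma>\<in>K. g \<sigma> < g \<tau>} n \<alpha>"
proof -
  obtain r where "r < g \<tau>" and "{\<sigma>\<in>K. g \<sigma> < g \<tau>} = sublevel K g r"
    using strict_sublevel_eq_sublevel[OF assms] .
  moreover have "sublevel K g q \<subseteq> {\<sigma>\<in>K. g \<sigma> < g \<tau>}" if "q < g \<tau>" for q
    using that unfolding sublevel_def by auto
  ultimately show ?thesis
    unfolding terminating_simplex_def by (metis is_boundary_mono)
qed

lemma terminating_simplex_same_order: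
  assumes "finite K" and "same_order_on K g h" and "terminating_simplex K g n \<alpha> \<tau>"
  shows "terminating_simplex K h n \<alpha> \<tau>"
proof -
  have "\<tau> \<in> K" using assms(3) unfolding terminating_simplex_def by simp
  then have "sublevel K h (h \<tau>) = sublevel K g (g \<tau>)"
    and "{\<sigma>\<in>K. h \<sigma> < h \<tau>} = {\<sigma>\<in>K. g \<sigma> < g \<tau>}"
    using assms(2) same_order_on_less[OF assms(2)] unfolding sublevel_def same_order_on_def
    by auto
  then show ?thesis using assms(3) by (simp add: terminating_simplex_iff[OF assms(1)])
qed

lemma induced_perm_same_order:
  assumes "set ss \<subseteq> K" and "same_order_on K g h" and "induced_perm ss g p"
  shows "induced_perm ss h p"
proof -
  have p: "p permutes {..<length ss}" using assms(3) unfolding induced_perm_def by simp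
  have "ss ! p i \<in> K" if "i < length ss" for i
    using assms(1) permutes_in_image[OF p] that by auto
  then show ?thesis
    using assms(3) same_order_on_less[OF assms(2)] unfolding induced_perm_def by auto
qed

lemma inj_perturbation_mono:
  "inj_perturbation K f \<epsilon> g \<Longrightarrow> \<epsilon> \<le> t \<Longrightarrow> inj_perturbation K f t g"
  unfolding inj_perturbation_def by force

lemma eventually_interpolation_preserves_order:
  fixes f g :: "'a \<Rightarrow> real"
  assumes "finite K"
  shows "\<forall>\<^sub>F \<mu> in at_right 0. \<forall>\<sigma>\<in>K. \<forall>\<rho>\<in>K.
           g \<sigma> < g \<rho> \<longrightarrow> (1 - \<mu>) * g \<sigma> + \<mu> * f \<sigma> < (1 - \<mu>) * g \<rho> + \<mu> * f \<rho>"
proof -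
  have "\<forall>\<^sub>F \<mu> in at_right 0. (1 - \<mu>) * g \<sigma> + \<mu> * f \<sigma> < (1 - \<mu>) * g \<rho> + \<mu> * f \<rho>"
    if "g \<sigma> < g \<rho>" for \<sigma> \<rho>
  proof -
    have "((\<lambda>\<mu>. ((1 - \<mu>) * g \<rho> + \<mu> * f \<rho>) - ((1 - \<mu>) * g \<sigma> + \<mu> * f \<sigma>))
            \<longlongrightarrow> ((1 - 0) * g \<rho> + 0 * f \<rho>) - ((1 - 0) * g \<sigma> + 0 * f \<sigma>)) (at_right 0)"
      by (intro tendsto_intros)
    then have "\<forall>\<^sub>F \<mu> in at_right 0. 0 < ((1 - \<mu>) * g \<rho> + \<mu> * f \<rho>) - ((1 - \<mu>) * g \<sigma> + \<mu> * f \<sigma>)"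
      using that by (intro order_tendstoD(1)) auto
    then show ?thesis by eventually_elim simp
  qed
  then show ?thesis
    using assms by (intro eventually_ball_finite ballI) (auto intro: eventually_mono)
qed

lemma interpolation_inj_perturbation:
  assumes "filtration_fun K f" and g: "inj_perturbation K f t g" and "0 \<le> \<mu>" "\<mu> \<le> 1"
    and h: "h = (\<lambda>\<sigma>. (1 - \<mu>) * g \<sigma> + \<mu> * f \<sigma>)"
    and less: "\<forall>\<sigma>\<in>K. \<forall>\<rho>\<in>K. g \<sigma> < g \<rho> \<longrightarrow> h \<sigma> < h \<rho>"
  shows "inj_perturbation K f ((1 - \<mu>) * t) h"
proof -
  have "filtration_fun K g" and "inj_on g K" and dist: "\<forall>\<sigma>\<in>K. \<bar>f \<sigma> - g \<sigma>\<bar> \<le> t"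
    using g unfolding inj_perturbation_def by auto
  have "filtration_fun K h"
    using \<open>filtration_fun K g\<close> assms(1) \<open>0 \<le> \<mu>\<close> \<open>\<mu> \<le> 1\<close>
    unfolding filtration_fun_def h by (auto intro!: add_mono mult_left_mono)
  moreover have "inj_on h K"
    using same_order_onI[OF \<open>inj_on g K\<close> less] \<open>inj_on g K\<close>
    unfolding same_order_on_def inj_on_def by (metis order_antisym order_refl)
  moreover have "\<bar>f \<sigma> - h \<sigma>\<bar> \<le> (1 - \<mu>) * t" if "\<sigma> \<in> K" for \<sigma>
  proof -
    have "f \<sigma> - h \<sigma> = (1 - \<mu>) * (f \<sigma> - g \<sigma>)"
      unfolding h by (simp add: algebra_simps)
    then have "\<bar>f \<sigma> - h \<sigma>\<bar> = (1 - \<mu>) * \<bar>f \<sigma> - g \<sigma>\<bar>"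
      using \<open>\<mu> \<le> 1\<close> by (simp add: abs_mult)
    also have "\<dots> \<le> (1 - \<mu>) * t" using dist that \<open>\<mu> \<le> 1\<close> by (simp add: mult_left_mono)
    finally show ?thesis .
  qed
  ultimately show ?thesis unfolding inj_perturbation_def by blast
qed

lemma filterlim_one_minus_divide_at_left:
  fixes t :: real
  assumes "t > 0"
  shows "filterlim (\<lambda>\<epsilon>. 1 - \<epsilon> / t) (at_right 0) (at_left t)"
proof (rule tendsto_imp_filterlim_at_right)
  have "((\<lambda>\<epsilon>. 1 - \<epsilon> / t) \<longlongrightarrow> 1 - t / t) (at_left t)"
    using assms by (intro tendsto_intros) auto
  then show "((\<lambda>\<epsilon>. 1 - \<epsilon> / t) \<longlongrightarrow> 0) (at_left t)" using assms by simp
  show "\<forall>\<^sub>F \<epsilon> in at_left t. 0 < 1 - \<epsilon> / t"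
    using eventually_at_left_real[OF assms] by eventually_elim (use assms in auto)
qed

lemma eventually_inj_perturbation_same_order:
  assumes "finite K" and "filtration_fun K f" and g: "inj_perturbation K f t g" and "t > 0"
  shows "\<forall>\<^sub>F \<epsilon> in at_left t. \<exists>h. inj_perturbation K f \<epsilon> h \<and> same_order_on K g h"
proof -
  have "inj_on g K" using g unfolding inj_perturbation_def by simp
  let ?h = "\<lambda>\<mu> \<sigma>. (1 - \<mu>) * g \<sigma> + \<mu> * f \<sigma>"
  have "\<forall>\<^sub>F \<epsilon> in at_left t. \<forall>\<sigma>\<in>K. \<forall>\<rho>\<in>K. g \<sigma> < g \<rho> \<longrightarrow> ?h (1 - \<epsilon> / t) \<sigma> < ?h (1 - \<epsilon> / t) \<rho>"
    using eventually_interpolation_preserves_order[OF assms(1)]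
      filterlim_one_minus_divide_at_left[OF \<open>t > 0\<close>]
    by (rule eventually_compose_filterlim)
  moreover have "\<forall>\<^sub>F \<epsilon> in at_left t. \<epsilon> \<in> {0<..<t}"
    using eventually_at_left_real[OF \<open>t > 0\<close>] .
  ultimately show ?thesis
  proof eventually_elim
    case (elim \<epsilon>)
    define \<mu> where "\<mu> = 1 - \<epsilon> / t"
    have "0 \<le> \<mu>" "\<mu> \<le> 1" and \<epsilon>: "(1 - \<mu>) * t = \<epsilon>"
      using elim(2) \<open>t > 0\<close> unfolding \<mu>_def by auto
    have less: "\<forall>\<sigma>\<in>K. \<forall>\<rho>\<in>K. g \<sigma> < g \<rho> \<longrightarrow> ?h \<mu> \<sigma> < ?h \<mu> \<rho>"
      using elim(1) unfolding \<mu>_def .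
    have "inj_perturbation K f \<epsilon> (?h \<mu>)"
      using interpolation_inj_perturbation[OF assms(2) g \<open>0 \<le> \<mu>\<close> \<open>\<mu> \<le> 1\<close> refl less]
      unfolding \<epsilon> .
    moreover have "same_order_on K g (?h \<mu>)"
      using \<open>inj_on g K\<close> less by (rule same_order_onI)
    ultimately show ?case by blast
  qed
qed

lemma eventually_eq_at_left_of_mono:
  fixes S :: "real \<Rightarrow> 'a set"
  assumes "finite (S t)" and "\<And>\<epsilon>. \<epsilon> \<le> t \<Longrightarrow> S \<epsilon> \<subseteq> S t"
    and "\<And>x. x \<in> S t \<Longrightarrow> \<forall>\<^sub>F \<epsilon> in at_left t. x \<in> S \<epsilon>"
  shows "\<forall>\<^sub>F \<epsilon> in at_left t. S \<epsilon> = S t"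
proof -
  have "\<forall>\<^sub>F \<epsilon> in at_left t. \<forall>x\<in>S t. x \<in> S \<epsilon>"
    by (intro eventually_ball_finite assms(1) ballI assms(3))
  moreover have "\<forall>\<^sub>F \<epsilon> in at_left t. \<epsilon> < t"
    by (simp add: eventually_at_filter)
  ultimately show ?thesis
  proof eventually_elim
    case (elim \<epsilon>)
    then show ?case using assms(2)[of \<epsilon>] by auto
  qed
qed

lemma eventually_Sigma_eps_eq:
  assumes "finite K" and "filtration_fun K f" and "t > 0"
  shows "\<forall>\<^sub>F \<epsilon> in at_left t. Sigma_eps K f n \<alpha> \<epsilon> = Sigma_eps K f n \<alpha> t"
proof (rule eventually_eq_at_left_of_mono)
  show "finite (Sigma_eps K f n \<alpha> t)"
    using assms(1) by (rule finite_subset[rotated]) (auto simp: Sigma_eps_def terminating_simplex_def)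
  show "Sigma_eps K f n \<alpha> \<epsilon> \<subseteq> Sigma_eps K f n \<alpha> t" if "\<epsilon> \<le> t" for \<epsilon>
    using that inj_perturbation_mono unfolding Sigma_eps_def by blast
  fix \<tau> assume "\<tau> \<in> Sigma_eps K f n \<alpha> t"
  then obtain g where g: "inj_perturbation K f t g" "terminating_simplex K g n \<alpha> \<tau>"
    unfolding Sigma_eps_def by blast
  from eventually_inj_perturbation_same_order[OF assms(1,2) g(1) assms(3)]
  show "\<forall>\<^sub>F \<epsilon> in at_left t. \<tau> \<in> Sigma_eps K f n \<alpha> \<epsilon>"
    by eventually_elim (use terminating_simplex_same_order[OF assms(1) _ g(2)] in \<open>auto simp: Sigma_eps_def\<close>)
qed

lemma eventually_Pi_eps_eq:
  assumes "finite K" and "filtration_fun K f" and "set ss \<subseteq> K" and "t > 0"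
  shows "\<forall>\<^sub>F \<epsilon> in at_left t. Pi_eps K f ss \<epsilon> = Pi_eps K f ss t"
proof (rule eventually_eq_at_left_of_mono)
  show "finite (Pi_eps K f ss t)"
    using finite_permutations[of "{..<length ss}"]
    by (rule finite_subset[rotated]) (auto simp: Pi_eps_def induced_perm_def)
  show "Pi_eps K f ss \<epsilon> \<subseteq> Pi_eps K f ss t" if "\<epsilon> \<le> t" for \<epsilon>
    using that inj_perturbation_mono unfolding Pi_eps_def by blast
  fix p assume "p \<in> Pi_eps K f ss t"
  then obtain g where g: "inj_perturbation K f t g" "induced_perm ss g p"
    unfolding Pi_eps_def by blast
  from eventually_inj_perturbation_same_order[OF assms(1,2) g(1) assms(4)]
  show "\<forall>\<^sub>F \<epsilon> in at_left t. p \<in> Pi_eps K f ss \<epsilon>"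
    by eventually_elim (use induced_perm_same_order[OF assms(3) _ g(2)] in \<open>auto simp: Pi_eps_def\<close>)
qed

theorem lemma3p1:
  fixes K :: "'v::linorder set set" and f :: "'v set \<Rightarrow> real" and n :: nat
    and \<alpha> :: "'v set \<Rightarrow> 'k::field" and a b :: real and ss :: "'v set list"
  assumes "simplicial_complex K"
    and "filtration_fun K f" and "inj_on f K"
    and "n > 0"
    and "is_cycle K (sublevel K f a) n \<alpha>"
    and "\<not> is_boundary K (sublevel K f a) n \<alpha>"
    and "birth K f n \<alpha> a = a"
    and "\<exists>q \<ge> a. is_boundary K (sublevel K f q) n \<alpha>"
    and "term_scale K f n \<alpha> a = b"
    and "b > a"
    and "distinct ss" and "set ss = {\<sigma>\<in>K. card \<sigma> = n + 2}"
  shows "\<forall>t \<in> {0<..(b - a) / 2}. \<exists>\<delta>>0. \<forall>\<epsilon> \<in> {t - \<delta><..t} \<inter> {0<..(b - a) / 2}.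
           Sigma_eps K f n \<alpha> \<epsilon> = Sigma_eps K f n \<alpha> t \<and> Pi_eps K f ss \<epsilon> = Pi_eps K f ss t"
proof
  fix t :: real assume "t \<in> {0<..(b - a) / 2}"
  then have "t > 0" by simp
  have "finite K" using assms(1) unfolding simplicial_complex_def by simp
  have "set ss \<subseteq> K" using assms(12) by auto
  have "\<forall>\<^sub>F \<epsilon> in at_left t.
          Sigma_eps K f n \<alpha> \<epsilon> = Sigma_eps K f n \<alpha> t \<and> Pi_eps K f ss \<epsilon> = Pi_eps K f ss t"
    using eventually_Sigma_eps_eq[OF \<open>finite K\<close> assms(2) \<open>t > 0\<close>]
      eventually_Pi_eps_eq[OF \<open>finite K\<close> assms(2) \<open>set ss \<subseteq> K\<close> \<open>t > 0\<close>]
    by (rule eventually_conj)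
  then obtain c where "c < t" and c: "\<And>\<epsilon>. c < \<epsilon> \<Longrightarrow> \<epsilon> < t \<Longrightarrow>
      Sigma_eps K f n \<alpha> \<epsilon> = Sigma_eps K f n \<alpha> t \<and> Pi_eps K f ss \<epsilon> = Pi_eps K f ss t"
    unfolding eventually_at_left_field by blast
  have "\<forall>\<epsilon> \<in> {c<..t}. Sigma_eps K f n \<alpha> \<epsilon> = Sigma_eps K f n \<alpha> t \<and> Pi_eps K f ss \<epsilon> = Pi_eps K f ss t"
    using c by (metis greaterThanAtMost_iff order_le_less)
  moreover have "t - c > 0" and "{t - (t - c)<..t} = {c<..t}" using \<open>c < t\<close> by simp_all
  ultimately show "\<exists>\<delta>>0. \<forall>\<epsilon> \<in> {t - \<delta><..t} \<inter> {0<..(b - a) / 2}.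
          Sigma_eps K f n \<alpha> \<epsilon> = Sigma_eps K f n \<alpha> t \<and> Pi_eps K f ss \<epsilon> = Pi_eps K f ss t"
    by blast
qed

end
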